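(* Let $m\in\mathbb Z$. For all $N\ge1$ and all $z=x+iy$ with $-\pi/10\le x\le2\pi$ and $y=8\pi/5$, $$\frac{e^{z/N}}{2\pi i\,(e^{z/N}-1)^{m+1}(e^{z/N})_N}=O(N^{m+1}),$$ with implied constant depending only on $m$.
   Context: $(q)_N:=(1-q)(1-q^2)\cdots(1-q^N)$. *)

theory Defs
  imports Complex_Main
begin

definition qpoch :: "complex \<Rightarrow> nat \<Rightarrow> complex" where
  "qpoch q N = (\<Prod>k=1..N. (1 - q ^ k))"

end

theory Submission
  imports Defs "HOL-Analysis.Complex_Transcendental"
begin

(*
  Write q = exp (a + i b) with a = x/N and b = 8 pi/(5N). Each factor of the q-Pochhammer symbol
  satisfies |1 - q^k| >= 2 exp (k a/2) sin (k b/2), so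
    |(q)_N| >= exp (x (N+1)/4) * prod_{k=1..N} 2 sin (4 pi k/(5N)).
  The logarithm of the sine product is a Riemann sum of the positive integral of ln (2 sin t) over
  [0, 4 pi/5]; bounding ln (2 sin t) below by a step function (with a logarithmic piece near t = 0,
  summed via n! >= (n/e)^n) shows that it grows at least like pi N/40. This compensates
  exp (x (N+1)/4) for x >= -pi/10, so |(q)_N| is bounded below by a constant. Finally N |q - 1| lies
  between two positive constants and |q| <= exp (2 pi), which gives the bound O(N^(m+1)).
*)

section \<open>Estimates for \<open>exp w - 1\<close>\<close>

lemma abs_exp_minus_one_le: "\<bar>exp (a::real) - 1\<bar> \<le> \<bar>a\<bar> * exp \<bar>a\<bar>"
proof (cases "a \<ge> 0")
  case True
  have "exp a * (1 - a) \<le> exp a * exp (-a)"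
    using exp_ge_add_one_self[of "-a"] by (intro mult_left_mono) auto
  then show ?thesis
    using True by (simp add: exp_minus field_simps)
next
  case False
  then have "\<bar>exp a - 1\<bar> = 1 - exp a"
    by simp
  also have "\<dots> \<le> \<bar>a\<bar>"
    using False exp_ge_add_one_self[of a] by linarith
  also have "\<dots> \<le> \<bar>a\<bar> * exp \<bar>a\<bar>"
    by (simp add: mult_le_cancel_left1)
  finally show ?thesis .
qed

lemma exp_eq_exp_half_squared: "exp (a::real) = (exp (a/2))^2"
  by (simp add: power2_eq_square flip: exp_add)

lemma norm_exp_Complex_minus_one_sq:
  "(norm (exp (Complex a b) - 1))^2 = (exp a - 1)^2 + 4 * exp a * (sin (b/2))^2"
proof -
  have "exp (Complex a b) - 1 = Complex (exp a * cos b - 1) (exp a * sin b)"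
    by (simp add: exp_Complex complex_eq_iff)
  then have "(norm (exp (Complex a b) - 1))^2 = (exp a * cos b - 1)^2 + (exp a * sin b)^2"
    by (simp add: cmod_def)
  also have "\<dots> = (exp a)^2 * ((sin b)^2 + (cos b)^2) - 2 * exp a * cos b + 1"
    by (simp only: power2_eq_square) algebra
  also have "\<dots> = (exp a)^2 - 2 * exp a * cos b + 1"
    by simp
  also have "\<dots> = (exp a - 1)^2 + 4 * exp a * (sin (b/2))^2"
  proof -
    have cos_half: "cos b = 1 - 2 * (sin (b/2))^2"
      using cos_double_sin[of "b/2"] by simp
    show ?thesis
      unfolding cos_half by (simp add: power2_eq_square algebra_simps)
  qed
  finally show ?thesis .
qed

lemma norm_exp_Complex_minus_one_ge:
  "2 * exp (a/2) * \<bar>sin (b/2)\<bar> \<le> norm (exp (Complex a b) - 1)"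
proof (rule power2_le_imp_le)
  have "(2 * exp (a/2) * \<bar>sin (b/2)\<bar>)^2 = 4 * exp a * (sin (b/2))^2"
    by (simp add: power_mult_distrib flip: exp_eq_exp_half_squared)
  then show "(2 * exp (a/2) * \<bar>sin (b/2)\<bar>)^2 \<le> (norm (exp (Complex a b) - 1))^2"
    by (simp add: norm_exp_Complex_minus_one_sq)
qed simp

lemma norm_exp_Complex_minus_one_le:
  "norm (exp (Complex a b) - 1) \<le> \<bar>exp a - 1\<bar> + exp (a/2) * \<bar>b\<bar>"
proof (rule power2_le_imp_le)
  have "(sin (b/2))^2 \<le> (b/2)^2"
    using abs_sin_x_le_abs_x[of "b/2"] by (metis abs_le_square_iff)
  then have "(norm (exp (Complex a b) - 1))^2 \<le> (exp a - 1)^2 + exp a * b^2"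
    by (simp add: norm_exp_Complex_minus_one_sq power_divide)
  also have "\<dots> \<le> (\<bar>exp a - 1\<bar> + exp (a/2) * \<bar>b\<bar>)^2"
    by (simp add: power2_sum power_mult_distrib flip: exp_eq_exp_half_squared)
  finally show "(norm (exp (Complex a b) - 1))^2 \<le> (\<bar>exp a - 1\<bar> + exp (a/2) * \<bar>b\<bar>)^2" .
qed simp

section \<open>Elementary sine estimates\<close>

lemma abs_sin_nat_mult_le: "\<bar>sin (real n * t)\<bar> \<le> real n * \<bar>sin t\<bar>"
proof (induction n)
  case 0
  then show ?case by simp
next
  case (Suc n)
  have "\<bar>sin (real (Suc n) * t)\<bar> = \<bar>sin (real n * t) * cos t + cos (real n * t) * sin t\<bar>"
    by (simp add: distrib_right sin_add algebra_simps)
  also have "\<dots> \<le> \<bar>sin (real n * t)\<bar> * \<bar>cos t\<bar> + \<bar>cos (real n * t)\<bar> * \<bar>sin t\<bar>"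
    by (metis abs_mult abs_triangle_ineq)
  also have "\<dots> \<le> \<bar>sin (real n * t)\<bar> + \<bar>sin t\<bar>"
    by (intro add_mono mult_right_le_one_le mult_left_le_one_le) auto
  finally show ?case
    using Suc by (simp add: distrib_right)
qed

lemma sin_le_sin_of_symmetric_bounds:
  assumes "0 \<le> a" "a \<le> pi/2" "a \<le> s" "s \<le> pi - a"
  shows "sin a \<le> sin s"
proof (cases "s \<le> pi/2")
  case True
  then show ?thesis using assms by (intro sin_monotone_2pi_le) auto
next
  case False
  have "sin a \<le> sin (pi - s)" using assms False by (intro sin_monotone_2pi_le) auto
  then show ?thesis by simp
qed

text \<open>Jordan's inequality \<open>sin s \<ge> 2 s / pi\<close> would not do: the slope in
  \<open>sine_sum_rate_ge\<close> below would drop under \<open>pi/40\<close>.\<close>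

lemma sin_ge_19_20_mult:
  assumes "0 \<le> s" "s \<le> pi/6"
  shows "19/20 * s \<le> sin s"
proof -
  have taylor: "\<bar>sin s - (\<Sum>m<5. sin_coeff m * s ^ m)\<bar> \<le> inverse (fact 5) * \<bar>s\<bar> ^ 5"
    by (rule Maclaurin_sin_bound)
  have "sin_coeff 0 = 0" "sin_coeff 1 = 1" "sin_coeff 2 = 0" "sin_coeff 3 = -1/6" "sin_coeff 4 = 0"
    by (simp_all add: sin_coeff_def fact_numeral)
  then have "(\<Sum>m<5. sin_coeff m * s ^ m) = s - s^3/6"
    by (simp add: numeral_eq_Suc lessThan_Suc)
  with taylor assms have lower: "s - s^3/6 - s^5/120 \<le> sin s"
    by (simp add: fact_numeral abs_if split: if_splits)
  have "s \<le> 0.5236"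
    using assms pi_approx by simp
  with assms have "s^2 \<le> 0.5236^2" "s^4 \<le> 0.5236^4"
    by (auto intro: power_mono)
  then have "s^2/6 + s^4/120 \<le> 1/20"
    by (simp add: power_numeral_reduce)
  with assms have "s * (s^2/6 + s^4/120) \<le> s * (1/20)"
    by (intro mult_left_mono) auto
  with lower show ?thesis
    by (simp add: power_numeral_reduce algebra_simps)
qed

lemma ln_two_sin_le_ln_two_sin:
  assumes "0 < a" "a \<le> pi/2" "a \<le> s" "s \<le> pi - a"
  shows "ln (2 * sin a) \<le> ln (2 * sin s)"
proof -
  have "0 < sin a"
    using assms by (intro sin_gt_zero) auto
  moreover have "sin a \<le> sin s"
    using assms by (intro sin_le_sin_of_symmetric_bounds) auto
  ultimately show ?thesis by simp
qed

lemma ln_two_sin_ge_small: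
  assumes "0 < s" "s \<le> pi/6"
  shows "ln (19/10 * s) \<le> ln (2 * sin s)"
  using sin_ge_19_20_mult[of s] assms by (intro ln_mono) auto

lemma ln_two_sin_ge_levels:
  assumes "pi/6 \<le> s" "s \<le> 5*pi/6"
  shows "(if pi/4 \<le> s \<and> s \<le> 3*pi/4 then ln 2 / 2 else 0)
       + (if pi/3 \<le> s \<and> s \<le> 2*pi/3 then (ln 3 - ln 2) / 2 else 0) \<le> ln (2 * sin s)"
proof -
  have "ln (2 * sin (pi/6)) \<le> ln (2 * sin s)"
    using assms by (intro ln_two_sin_le_ln_two_sin) auto
  then have "0 \<le> ln (2 * sin s)"
    by (simp add: sin_30)
  moreover have "ln 2 / 2 \<le> ln (2 * sin s)" if "pi/4 \<le> s" "s \<le> 3*pi/4"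
    using ln_two_sin_le_ln_two_sin[of "pi/4" s] that by (simp add: sin_45 ln_sqrt)
  moreover have "ln 3 / 2 \<le> ln (2 * sin s)" if "pi/3 \<le> s" "s \<le> 2*pi/3"
    using ln_two_sin_le_ln_two_sin[of "pi/3" s] that by (simp add: sin_60 ln_sqrt)
  ultimately show ?thesis
    by (auto simp: field_simps)
qed

section \<open>A lower bound for a sum of logarithms of sines\<close>

lemma power_self_le_fact_mult_exp: "real n ^ n \<le> fact n * exp (real n)"
proof (induction n)
  case 0
  then show ?case by simp
next
  case (Suc n)
  have step: "(real n + 1) ^ n \<le> real n ^ n * exp 1"
  proof (cases "n = 0")
    case False
    then have "real n + 1 \<le> real n * exp (1 / real n)"
      using exp_ge_add_one_self[of "1 / real n"] by (simp add: field_simps)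
    then have "(real n + 1) ^ n \<le> (real n * exp (1 / real n)) ^ n"
      by (intro power_mono) auto
    also have "\<dots> = real n ^ n * exp 1"
      using False by (simp add: power_mult_distrib flip: exp_of_nat_mult)
    finally show ?thesis .
  qed simp
  have "real (Suc n) ^ Suc n = (real n + 1) * (real n + 1) ^ n"
    by (simp add: add.commute)
  also have "\<dots> \<le> (real n + 1) * (fact n * exp (real n) * exp 1)"
    using step Suc by (intro mult_left_mono) (auto intro: order_trans mult_right_mono)
  also have "\<dots> = fact (Suc n) * exp (real (Suc n))"
    by (simp add: algebra_simps flip: exp_add)
  finally show ?case .
qed

lemma ln_fact_ge: "real n * ln (real n) - real n \<le> ln (fact n)"
proof (cases "n = 0")
  case False
  have "ln (real n ^ n) \<le> ln (fact n * exp (real n))"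
    using power_self_le_fact_mult_exp[of n] False by (subst ln_le_cancel_iff) auto
  then show ?thesis
    using False by (simp add: ln_realpow ln_mult)
qed simp

lemma mult_ln_minus_one_antimono:
  fixes u v c :: real
  assumes "0 < u" "u \<le> v" "0 < c" "c * v \<le> 1"
  shows "v * (ln (c * v) - 1) \<le> u * (ln (c * u) - 1)"
proof -
  have "0 < v" using assms by linarith
  have "u * ln (v / u) \<le> u * (v / u - 1)"
    using assms \<open>0 < v\<close> by (intro mult_left_mono ln_le_minus_one) auto
  also have "\<dots> = v - u"
    using assms by (simp add: field_simps)
  finally have "u * (ln (c * v) - ln (c * u)) \<le> v - u"
    using assms \<open>0 < v\<close> by (simp add: ln_mult ln_divide_pos)
  moreover have "(v - u) * ln (c * v) \<le> 0"
    using assms \<open>0 < v\<close> by (intro mult_nonneg_nonpos) auto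
  ultimately show ?thesis
    by (simp add: algebra_simps)
qed

lemma sum_ln_nat_eq_ln_fact: "(\<Sum>k=1..n. ln (real k)) = ln (fact n)"
  unfolding fact_prod of_nat_prod by (subst ln_prod) auto

lemma sum_ln_mult_ge:
  assumes "real A \<le> v" "0 < c" "c * v \<le> 1"
  shows "v * (ln (c * v) - 1) \<le> (\<Sum>k=1..A. ln (c * real k))"
proof (cases "A = 0")
  case True
  have "0 \<le> v" using assms(1) by linarith
  moreover have "ln (c * v) \<le> 0"
    using assms by (cases "v = 0") auto
  ultimately show ?thesis
    using True by (simp add: mult_nonneg_nonpos)
next
  case False
  have "v * (ln (c * v) - 1) \<le> real A * (ln (c * real A) - 1)"
    using assms False by (intro mult_ln_minus_one_antimono) auto
  also have "\<dots> = real A * ln c + (real A * ln (real A) - real A)"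
    using False assms by (simp add: ln_mult algebra_simps)
  also have "\<dots> \<le> real A * ln c + ln (fact A)"
    using ln_fact_ge[of A] by linarith
  also have "\<dots> = (\<Sum>k=1..A. ln (c * real k))"
    using assms by (simp add: ln_mult sum.distrib flip: sum_ln_nat_eq_ln_fact)
  finally show ?thesis .
qed

lemma card_between_multiples_ge:
  fixes a b c d N :: nat
  assumes "0 < a * N" "0 < c" "0 < d" "b \<le> d"
  shows "real (b * N) / d - real (a * N) / c - 1 \<le> card {k\<in>{1..N}. a * N \<le> c * k \<and> d * k \<le> b * N}"
proof -
  define lo where "lo = (a * N + c - 1) div c"
  define hi where "hi = b * N div d"
  have lo_upper: "c * lo \<le> a * N + c - 1"
    unfolding lo_def by (simp add: mult.commute div_times_less_eq_dividend)
  have below_next_multiple: "x < e * (x div e) + e" if "0 < e" for x e :: nat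
    using that mult_div_mod_eq[of e x] mod_less_divisor[of e x] by linarith
  have lo_lower: "a * N \<le> c * lo"
    using below_next_multiple[OF assms(2), of "a * N + c - 1"] unfolding lo_def by linarith
  have hi_upper: "d * hi \<le> b * N"
    unfolding hi_def by (simp add: mult.commute div_times_less_eq_dividend)
  have hi_lower: "b * N < d * hi + d"
    unfolding hi_def by (rule below_next_multiple[OF assms(3)])
  have "1 \<le> lo"
    using lo_lower assms(1) by (cases lo) auto
  moreover have "hi \<le> N"
    using hi_upper assms(3,4) mult_le_mono1[of b d N] by (metis le_trans mult_le_cancel1 not_less)
  ultimately have "{lo..hi} \<subseteq> {k\<in>{1..N}. a * N \<le> c * k \<and> d * k \<le> b * N}"
    using lo_lower hi_upper by (auto intro: order_trans[OF _ mult_le_mono2] order_trans[OF mult_le_mono2])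
  then have "card {lo..hi} \<le> card {k\<in>{1..N}. a * N \<le> c * k \<and> d * k \<le> b * N}"
    by (intro card_mono) auto
  moreover have "real hi + 1 - real lo \<le> real (card {lo..hi})"
    by (cases "lo \<le> Suc hi") (auto simp: of_nat_diff)
  moreover have "real (b * N) / d - real (a * N) / c - 1 \<le> real hi + 1 - real lo"
  proof -
    have "real (b * N) < real d * (real hi + 1)"
      using hi_lower by (simp add: algebra_simps flip: of_nat_mult of_nat_add)
    then have "real (b * N) / d < real hi + 1"
      using assms(3) by (simp add: divide_less_eq mult.commute)
    moreover have "c * lo \<le> a * N + c"
      using lo_upper by linarith
    then have "real lo * c \<le> real (a * N) + c"
      by (simp add: mult.commute flip: of_nat_mult of_nat_add)
    then have "real lo \<le> real (a * N) / c + 1"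
      using assms(2) by (simp add: field_simps)
    ultimately show ?thesis by linarith
  qed
  ultimately show ?thesis by linarith
qed

lemma sum_const_between_multiples_ge:
  fixes a b c d N :: nat and v :: real
  assumes "0 < a * N" "0 < c" "0 < d" "b \<le> d" "0 \<le> v"
  shows "(real (b * N) / d - real (a * N) / c - 1) * v
    \<le> (\<Sum>k=1..N. if a * N \<le> c * k \<and> d * k \<le> b * N then v else 0)"
proof -
  have "(\<Sum>k=1..N. if a * N \<le> c * k \<and> d * k \<le> b * N then v else 0)
      = card {k\<in>{1..N}. a * N \<le> c * k \<and> d * k \<le> b * N} * v"
    by (simp add: sum.inter_filter [symmetric])
  then show ?thesis
    using card_between_multiples_ge[OF assms(1-4)] assms(5) by (simp add: mult_right_mono)
qed

lemma step_le_pi_iff: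
  assumes "0 < N" "0 < q"
  shows "real k * (4*pi/(5*real N)) \<le> real p / real q * pi \<longleftrightarrow> 4*q*k \<le> 5*p*N"
proof -
  have "real k * (4*pi/(5*real N)) = 4 * real k / (5 * real N) * pi"
    by simp
  then have "real k * (4*pi/(5*real N)) \<le> real p / real q * pi \<longleftrightarrow> 4 * real k / (5 * real N) \<le> real p / real q"
    using mult_le_cancel_right_pos[OF pi_gt_zero] by presburger
  also have "\<dots> \<longleftrightarrow> real (4*q*k) \<le> real (5*p*N)"
    using assms by (simp add: field_simps)
  finally show ?thesis by linarith
qed

lemma pi_le_step_iff:
  assumes "0 < N" "0 < q"
  shows "real p / real q * pi \<le> real k * (4*pi/(5*real N)) \<longleftrightarrow> 5*p*N \<le> 4*q*k"
proof -
  have "real k * (4*pi/(5*real N)) = 4 * real k / (5 * real N) * pi"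
    by simp
  then have "real p / real q * pi \<le> real k * (4*pi/(5*real N)) \<longleftrightarrow> real p / real q \<le> 4 * real k / (5 * real N)"
    using mult_le_cancel_right_pos[OF pi_gt_zero] by presburger
  also have "\<dots> \<longleftrightarrow> real (5*p*N) \<le> real (4*q*k)"
    using assms by (simp add: field_simps)
  finally show ?thesis by linarith
qed

text \<open>With \<open>s = k h\<close>, the first step lives on \<open>s \<le> pi/6\<close>, the second on
  \<open>[pi/4, 3 pi/4]\<close> and the third on \<open>[pi/3, 2 pi/3]\<close>; on the last range the second and third
  steps add up to \<open>ln 3 / 2 = ln (2 sin (pi/3))\<close>.\<close>

lemma ln_two_sin_step_minorant:
  fixes N k :: nat
  assumes k: "1 \<le> k" "k \<le> N"
  defines "h \<equiv> 4*pi/(5*real N)"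
  shows "(if 24*k \<le> 5*N then ln (19/10 * h * real k) else 0)
       + (if 5*N \<le> 16*k \<and> 16*k \<le> 15*N then ln 2 / 2 else 0)
       + (if 5*N \<le> 12*k \<and> 6*k \<le> 5*N then (ln 3 - ln 2) / 2 else 0)
       \<le> ln (2 * sin (real k * h))"
proof -
  have N: "0 < N" using k by linarith
  have le_iff: "real k * h \<le> real p / real q * pi \<longleftrightarrow> 4*q*k \<le> 5*p*N" if "0 < q" for p q
    unfolding h_def using N that by (rule step_le_pi_iff)
  have ge_iff: "real p / real q * pi \<le> real k * h \<longleftrightarrow> 5*p*N \<le> 4*q*k" if "0 < q" for p q
    unfolding h_def using N that by (rule pi_le_step_iff)
  show ?thesis
  proof (cases "24*k \<le> 5*N")
    case True
    have "0 < real k * h"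
      using k N unfolding h_def by simp
    moreover have "real k * h \<le> pi/6"
      using True le_iff[of 6 1] by simp
    ultimately have "ln (19/10 * h * real k) \<le> ln (2 * sin (real k * h))"
      using ln_two_sin_ge_small by (simp only: mult.assoc mult.commute[of h])
    moreover have "\<not> 5*N \<le> 16*k" "\<not> 5*N \<le> 12*k"
      using True k by linarith+
    ultimately show ?thesis
      using True by simp
  next
    case False
    have "pi/6 \<le> real k * h" "real k * h \<le> 5*pi/6"
      using False k ge_iff[of 6 1] le_iff[of 6 5] by simp_all
    moreover have "pi/4 \<le> real k * h \<and> real k * h \<le> 3*pi/4 \<longleftrightarrow> 5*N \<le> 16*k \<and> 16*k \<le> 15*N"
      using ge_iff[of 4 1] le_iff[of 4 3] by simp
    moreover have "pi/3 \<le> real k * h \<and> real k * h \<le> 2*pi/3 \<longleftrightarrow> 5*N \<le> 12*k \<and> 6*k \<le> 5*N"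
      using ge_iff[of 3 1] le_iff[of 3 2] by simp
    ultimately show ?thesis
      using False ln_two_sin_ge_levels[of "real k * h"] by simp
  qed
qed

lemma sum_ln_small_steps_ge:
  assumes N: "1 \<le> N"
  defines "h \<equiv> 4*pi/(5*real N)"
  shows "5 * real N / 24 * (ln (19*pi/60) - 1)
    \<le> (\<Sum>k=1..N. if 24*k \<le> 5*N then ln (19/10 * h * real k) else 0)"
proof -
  have "(\<Sum>k=1..N. if 24*k \<le> 5*N then ln (19/10 * h * real k) else 0)
      = (\<Sum>k\<in>{k\<in>{1..N}. 24*k \<le> 5*N}. ln (19/10 * h * real k))"
    by (subst sum.inter_filter) auto
  also have "{k\<in>{1..N}. 24*k \<le> 5*N} = {1..5*N div 24}"
    by auto
  finally have sum_eq: "(\<Sum>k=1..N. if 24*k \<le> 5*N then ln (19/10 * h * real k) else 0)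
      = (\<Sum>k=1..5*N div 24. ln (19/10 * h * real k))" .
  have "19/10 * h * (5 * real N / 24) = 19*pi/60"
    using N unfolding h_def by (simp add: field_simps)
  moreover have "5 * real N / 24 * (ln (19/10 * h * (5 * real N / 24)) - 1)
      \<le> (\<Sum>k=1..5*N div 24. ln (19/10 * h * real k))"
  proof (rule sum_ln_mult_ge)
    have "24 * (5*N div 24) \<le> 5*N"
      by presburger
    then show "real (5*N div 24) \<le> 5 * real N / 24"
      using of_nat_mono[of "24 * (5*N div 24)" "5*N"] by simp
    show "19/10 * h * (5 * real N / 24) \<le> 1"
      using N pi_approx unfolding h_def by (simp add: field_simps)
  qed (use N in \<open>simp add: h_def\<close>)
  ultimately show ?thesis
    unfolding sum_eq by (simp only:)
qed

text \<open>The right-hand side is the slope in \<open>N\<close> of the summed step minorant; it has to beat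
  the loss \<open>pi/40\<close> per unit of \<open>N\<close> caused by \<open>exp (x (N+1)/4)\<close> for \<open>x \<ge> -pi/10\<close>.\<close>

lemma sine_sum_rate_ge:
  "pi/40 \<le> 5/24 * (ln (19*pi/60) - 1) + 5/16 * ln 2 + 5/24 * (ln 3 - ln 2)"
proof -
  have pi: "3.1415 \<le> pi" "pi \<le> 3.1416"
    using pi_approx by simp_all
  have exp_019: "exp (19/100::real) \<le> 100/81"
  proof -
    have "81/100 \<le> exp (-(19/100::real))"
      using exp_ge_add_one_self[of "-(19/100)"] by simp
    then have "1 / exp (-(19/100::real)) \<le> 1 / (81/100)"
      by (intro divide_left_mono) auto
    then show ?thesis by (simp add: exp_minus field_simps)
  qed
  have "exp (2 + 6*pi/25) \<le> exp (276/100)"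
    using pi by simp
  also have "exp (276/100::real) = exp 1 ^ 2 * exp (19/100) ^ 4"
    by (simp flip: exp_of_nat_mult exp_add)
  also have "\<dots> \<le> (272/100) ^ 2 * (100/81) ^ 4"
    using e_less_272 exp_019 by (intro mult_mono power_mono) auto
  also have "\<dots> \<le> 2 * (19*3.1415/20) ^ 2"
    by (simp add: power_numeral_reduce)
  also have "\<dots> \<le> 2 * (19*pi/20) ^ 2"
    using pi by (intro mult_left_mono power_mono) auto
  finally have "2 + 6*pi/25 \<le> ln (2 * (19*pi/20)^2)"
    by (subst ln_ge_iff) auto
  also have "\<dots> = ln 2 + 2 * ln (19*pi/20)"
    by (simp add: ln_mult ln_realpow)
  finally have "2 + 6*pi/25 \<le> ln 2 + 2 * ln (19*pi/20)" .
  moreover have "ln (19*pi/60) = ln (19*pi/20) - ln 3"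
    using ln_divide_pos[of "19*pi/20" 3] by simp
  ultimately show ?thesis
    by (simp add: ring_distribs)
qed

lemma sum_ln_two_sin_ge:
  assumes N: "1 \<le> N"
  shows "pi/40 * real N - ln 3 / 2 \<le> (\<Sum>k=1..N. ln (2 * sin (real k * (4*pi/(5*real N)))))"
proof -
  define h where "h = 4*pi/(5*real N)"
  have "pi/40 * real N - ln 3 / 2
      \<le> real N * (5/24 * (ln (19*pi/60) - 1) + 5/16 * ln 2 + 5/24 * (ln 3 - ln 2)) - ln 3 / 2"
    using mult_left_mono[OF sine_sum_rate_ge, of "real N"] by (simp add: mult.commute)
  also have "\<dots> = 5 * real N / 24 * (ln (19*pi/60) - 1)
      + (real (15 * N) / 16 - real (5 * N) / 16 - 1) * (ln 2 / 2)
      + (real (5 * N) / 6 - real (5 * N) / 12 - 1) * ((ln 3 - ln 2) / 2)"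
    by (simp add: field_simps)
  also have "\<dots> \<le> (\<Sum>k=1..N. if 24*k \<le> 5*N then ln (19/10 * h * real k) else 0)
      + (\<Sum>k=1..N. if 5*N \<le> 16*k \<and> 16*k \<le> 15*N then ln 2 / 2 else 0)
      + (\<Sum>k=1..N. if 5*N \<le> 12*k \<and> 6*k \<le> 5*N then (ln 3 - ln 2) / 2 else 0)"
  proof (intro add_mono)
    show "(real (15 * N) / 16 - real (5 * N) / 16 - 1) * (ln 2 / 2)
        \<le> (\<Sum>k=1..N. if 5*N \<le> 16*k \<and> 16*k \<le> 15*N then ln 2 / 2 else 0)"
      using N sum_const_between_multiples_ge[of 5 N 16 16 15 "ln 2 / 2"] by simp
    show "(real (5 * N) / 6 - real (5 * N) / 12 - 1) * ((ln 3 - ln 2) / 2)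
        \<le> (\<Sum>k=1..N. if 5*N \<le> 12*k \<and> 6*k \<le> 5*N then (ln 3 - ln 2) / 2 else 0)"
      using N sum_const_between_multiples_ge[of 5 N 12 6 5 "(ln 3 - ln 2) / 2"] by simp
  qed (unfold h_def, rule sum_ln_small_steps_ge[OF N])
  also have "\<dots> \<le> (\<Sum>k=1..N. ln (2 * sin (real k * h)))"
    unfolding sum.distrib [symmetric] h_def by (intro sum_mono ln_two_sin_step_minorant) auto
  finally show ?thesis
    unfolding h_def .
qed

section \<open>The q-Pochhammer symbol and \<open>q - 1\<close>\<close>

lemma Complex_divide_of_nat: "Complex x y / of_nat N = Complex (x / real N) (y / real N)"
  by (simp add: complex_eq_iff)

lemma norm_qpoch_exp_Complex_ge:
  "exp (a * real N * (real N + 1) / 4) * (\<Prod>k=1..N. 2 * \<bar>sin (real k * b / 2)\<bar>)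
     \<le> norm (qpoch (exp (Complex a b)) N)"
proof -
  have power_eq: "exp (Complex a b) ^ k = exp (Complex (real k * a) (real k * b))" for k
  proof -
    have "of_nat k * Complex a b = Complex (real k * a) (real k * b)"
      by (simp add: complex_eq_iff)
    then show ?thesis
      by (simp flip: exp_of_nat_mult)
  qed
  have "(\<Sum>k=1..N. real k * a / 2) = a / 2 * (\<Sum>k=1..N. real k)"
    by (simp add: sum_distrib_left mult.commute)
  also have "\<dots> = a * real N * (real N + 1) / 4"
    using double_gauss_sum_from_Suc_0[of N, where ?'a = real] by (simp add: field_simps)
  finally have gauss: "(\<Sum>k=1..N. real k * a / 2) = a * real N * (real N + 1) / 4" .
  have "exp (a * real N * (real N + 1) / 4) * (\<Prod>k=1..N. 2 * \<bar>sin (real k * b / 2)\<bar>)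
      = (\<Prod>k=1..N. exp (real k * a / 2)) * (\<Prod>k=1..N. 2 * \<bar>sin (real k * b / 2)\<bar>)"
    unfolding gauss [symmetric] by (simp add: exp_sum)
  also have "\<dots> = (\<Prod>k=1..N. 2 * exp (real k * a / 2) * \<bar>sin (real k * b / 2)\<bar>)"
    by (simp add: prod.distrib [symmetric] mult.assoc mult.left_commute)
  also have "\<dots> \<le> (\<Prod>k=1..N. norm (exp (Complex a b) ^ k - 1))"
    unfolding power_eq by (intro prod_mono conjI norm_exp_Complex_minus_one_ge) auto
  also have "\<dots> = norm (qpoch (exp (Complex a b)) N)"
    unfolding qpoch_def by (simp add: prod_norm norm_minus_commute)
  finally show ?thesis .
qed

lemma norm_qpoch_ge_const:
  assumes N: "1 \<le> N" and x: "-pi/10 \<le> x"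
  shows "exp (-pi/40 - ln 3 / 2) \<le> norm (qpoch (exp (Complex x (8*pi/5) / of_nat N)) N)"
proof -
  define h where "h = 4*pi/(5*real N)"
  have sin_pos: "0 < sin (real k * h)" if "k \<in> {1..N}" for k
  proof (rule sin_gt_zero)
    show "0 < real k * h"
      using that N unfolding h_def by simp
    have "real k * h \<le> 4/5 * pi"
      using that step_le_pi_iff[of N 5 k 4] N unfolding h_def by simp
    then show "real k * h < pi"
      using pi_gt_zero by linarith
  qed
  have "(\<Prod>k=1..N. 2 * \<bar>sin (real k * (8*pi/5 / real N) / 2)\<bar>) = (\<Prod>k=1..N. exp (ln (2 * sin (real k * h))))"
  proof (rule prod.cong)
    fix k assume k: "k \<in> {1..N}"
    have "real k * (8*pi/5 / real N) / 2 = real k * h"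
      unfolding h_def by (simp add: field_simps)
    then show "2 * \<bar>sin (real k * (8*pi/5 / real N) / 2)\<bar> = exp (ln (2 * sin (real k * h)))"
      using sin_pos[OF k] by simp
  qed simp
  also have "\<dots> = exp (\<Sum>k=1..N. ln (2 * sin (real k * h)))"
    by (simp add: exp_sum)
  finally have sines: "exp (pi/40 * real N - ln 3 / 2) \<le> (\<Prod>k=1..N. 2 * \<bar>sin (real k * (8*pi/5 / real N) / 2)\<bar>)"
    using sum_ln_two_sin_ge[OF N] unfolding h_def by simp
  have "-pi/10 * (real N + 1) \<le> x * (real N + 1)"
    using x by (intro mult_right_mono) auto
  then have "-pi/40 - ln 3 / 2 \<le> x / real N * real N * (real N + 1) / 4 + (pi/40 * real N - ln 3 / 2)"
    using N by (simp add: field_simps)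
  then have "exp (-pi/40 - ln 3 / 2) \<le> exp (x / real N * real N * (real N + 1) / 4) * exp (pi/40 * real N - ln 3 / 2)"
    by (simp flip: exp_add)
  also have "\<dots> \<le> exp (x / real N * real N * (real N + 1) / 4) * (\<Prod>k=1..N. 2 * \<bar>sin (real k * (8*pi/5 / real N) / 2)\<bar>)"
    using sines by (intro mult_left_mono) auto
  also have "\<dots> \<le> norm (qpoch (exp (Complex x (8*pi/5) / of_nat N)) N)"
    unfolding Complex_divide_of_nat by (rule norm_qpoch_exp_Complex_ge)
  finally show ?thesis .
qed

lemma min_le_divide_of_nat: "1 \<le> N \<Longrightarrow> min x 0 \<le> x / real N"
  by (cases "0 \<le> x") (simp_all add: le_divide_eq mult_le_cancel_left2)

lemma divide_of_nat_le_max: "1 \<le> N \<Longrightarrow> x / real N \<le> max x 0"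
  by (cases "0 \<le> x") (simp_all add: divide_le_eq mult_le_cancel_left1 divide_nonpos_nonneg)

lemma norm_exp_divide_of_nat_le:
  assumes "1 \<le> N" "x \<le> 2*pi"
  shows "norm (exp (Complex x y / of_nat N)) \<le> exp (2*pi)"
proof -
  have "max x 0 \<le> 2*pi"
    using assms(2) pi_gt_zero by simp
  then have "x / real N \<le> 2*pi"
    using divide_of_nat_le_max[OF assms(1), of x] by linarith
  then show ?thesis
    unfolding Complex_divide_of_nat by simp
qed

lemma scaled_norm_exp_minus_one_ge:
  assumes N: "1 \<le> N" and x: "-pi/10 \<le> x"
  shows "2 * exp (-pi/20) * sin (4*pi/5) \<le> real N * norm (exp (Complex x (8*pi/5) / of_nat N) - 1)"
proof -
  have "0 < sin (4*pi/5)"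
    by (rule sin_gt_zero) auto
  have "-pi/10 \<le> min x 0"
    using x pi_gt_zero by simp
  also have "\<dots> \<le> x / real N"
    by (rule min_le_divide_of_nat[OF N])
  finally have "exp (-pi/20) \<le> exp (x / real N / 2)"
    by simp
  moreover have "sin (4*pi/5) \<le> real N * \<bar>sin (8*pi/5 / real N / 2)\<bar>"
    using abs_sin_nat_mult_le[of N "8*pi/5 / real N / 2"] N \<open>0 < sin (4*pi/5)\<close> by simp
  ultimately have "2 * exp (-pi/20) * sin (4*pi/5) \<le> 2 * exp (x / real N / 2) * (real N * \<bar>sin (8*pi/5 / real N / 2)\<bar>)"
    using \<open>0 < sin (4*pi/5)\<close> by (intro mult_mono mult_left_mono) auto
  also have "\<dots> = real N * (2 * exp (x / real N / 2) * \<bar>sin (8*pi/5 / real N / 2)\<bar>)"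
    by simp
  also have "\<dots> \<le> real N * norm (exp (Complex x (8*pi/5) / of_nat N) - 1)"
    unfolding Complex_divide_of_nat by (intro mult_left_mono norm_exp_Complex_minus_one_ge) auto
  finally show ?thesis .
qed

lemma scaled_norm_exp_minus_one_le:
  assumes N: "1 \<le> N" and x: "-pi/10 \<le> x" "x \<le> 2*pi"
  shows "real N * norm (exp (Complex x (8*pi/5) / of_nat N) - 1) \<le> exp (2*pi) * (2*pi + 8*pi/5)"
proof -
  define a where "a = x / real N"
  have "\<bar>x\<bar> \<le> 2*pi"
    using x pi_gt_zero by linarith
  moreover have "\<bar>a\<bar> \<le> \<bar>x\<bar>"
    using N unfolding a_def by (simp add: divide_le_eq mult_le_cancel_left1)
  ultimately have "exp \<bar>a\<bar> \<le> exp (2*pi)" "exp (a/2) \<le> exp (2*pi)"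
    by simp_all
  have "norm (exp (Complex x (8*pi/5) / of_nat N) - 1) \<le> \<bar>exp a - 1\<bar> + exp (a/2) * \<bar>8*pi/5 / real N\<bar>"
    unfolding Complex_divide_of_nat a_def by (rule norm_exp_Complex_minus_one_le)
  also have "\<dots> \<le> \<bar>a\<bar> * exp \<bar>a\<bar> + exp (a/2) * (8*pi/5 / real N)"
    using abs_exp_minus_one_le[of a] by simp
  finally have "real N * norm (exp (Complex x (8*pi/5) / of_nat N) - 1)
      \<le> \<bar>x\<bar> * exp \<bar>a\<bar> + exp (a/2) * (8*pi/5)"
    using N unfolding a_def by (simp add: field_simps mult_left_mono)
  also have "\<dots> \<le> 2*pi * exp (2*pi) + exp (2*pi) * (8*pi/5)"
    using \<open>\<bar>x\<bar> \<le> 2*pi\<close> \<open>exp \<bar>a\<bar> \<le> exp (2*pi)\<close> \<open>exp (a/2) \<le> exp (2*pi)\<close>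
    by (intro add_mono mult_mono mult_right_mono) auto
  finally show ?thesis
    by (simp add: algebra_simps)
qed

lemma inverse_powi_le:
  fixes d c C :: real
  assumes "0 < c" "c \<le> d" "d \<le> C"
  shows "inverse (d powi p) \<le> inverse c ^ nat p + C ^ nat (-p)"
proof (cases "0 \<le> p")
  case True
  then have "inverse (d powi p) = inverse d ^ nat p"
    by (simp add: power_int_def power_inverse)
  also have "\<dots> \<le> inverse c ^ nat p"
    using assms by (intro power_mono le_imp_inverse_le) auto
  finally show ?thesis
    using assms by (simp add: add_increasing2)
next
  case False
  then have "inverse (d powi p) = d ^ nat (-p)"
    by (simp add: power_int_def power_inverse)
  also have "\<dots> \<le> C ^ nat (-p)"
    using assms by (intro power_mono) auto
  finally show ?thesis
    using assms by (simp add: add_increasing)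
qed

lemma norm_divide_powi_rescale:
  fixes q P :: complex
  assumes "0 < N"
  shows "norm (q / (2 * complex_of_real pi * \<i> * (q - 1) powi p * P))
    = norm q / (2 * pi * norm P) * inverse ((real N * norm (q - 1)) powi p) * real N powi p"
  using assms by (simp add: norm_mult norm_divide norm_power_int power_int_mult_distrib field_simps)

theorem corollary3p3:
  fixes m :: int
  shows "\<exists>C::real. \<forall>N::nat. \<forall>x::real.
    N \<ge> 1 \<longrightarrow> - pi / 10 \<le> x \<longrightarrow> x \<le> 2 * pi \<longrightarrow>
    norm (exp (Complex x (8 * pi / 5) / of_nat N) /
          (2 * complex_of_real pi * \<i> * (exp (Complex x (8 * pi / 5) / of_nat N) - 1) powi (m + 1)
             * qpoch (exp (Complex x (8 * pi / 5) / of_nat N)) N))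
      \<le> C * real N powi (m + 1)"
proof -
  define c where "c = 2 * exp (-pi/20) * sin (4*pi/5)"
  define c' where "c' = exp (2*pi) * (2*pi + 8*pi/5)"
  define Q where "Q = exp (-pi/40 - ln 3 / 2)"
  define K where "K = inverse c ^ nat (m + 1) + c' ^ nat (-(m + 1))"
  have "0 < c"
    unfolding c_def by (intro mult_pos_pos sin_gt_zero) auto
  show ?thesis
  proof (intro exI[of _ "exp (2*pi) / (2 * pi * Q) * K"] allI impI)
    fix N :: nat and x :: real
    assume N: "1 \<le> N" and x: "-pi/10 \<le> x" "x \<le> 2*pi"
    let ?q = "exp (Complex x (8*pi/5) / of_nat N)"
    have "norm (?q / (2 * complex_of_real pi * \<i> * (?q - 1) powi (m + 1) * qpoch ?q N))
        = norm ?q / (2 * pi * norm (qpoch ?q N)) * inverse ((real N * norm (?q - 1)) powi (m + 1))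
          * real N powi (m + 1)"
      using N by (intro norm_divide_powi_rescale) auto
    also have "\<dots> \<le> exp (2*pi) / (2 * pi * Q) * K * real N powi (m + 1)"
    proof (intro mult_right_mono mult_mono)
      show "norm ?q / (2 * pi * norm (qpoch ?q N)) \<le> exp (2*pi) / (2 * pi * Q)"
        using norm_exp_divide_of_nat_le[OF N x(2)] norm_qpoch_ge_const[OF N x(1)]
        unfolding Q_def by (intro frac_le) auto
      show "inverse ((real N * norm (?q - 1)) powi (m + 1)) \<le> K"
        using \<open>0 < c\<close> scaled_norm_exp_minus_one_ge[OF N x(1)] scaled_norm_exp_minus_one_le[OF N x]
        unfolding K_def c_def c'_def by (intro inverse_powi_le)
    qed (auto simp: Q_def)
    finally show "norm (?q / (2 * complex_of_real pi * \<i> * (?q - 1) powi (m + 1) * qpoch ?q N))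
        \<le> exp (2*pi) / (2 * pi * Q) * K * real N powi (m + 1)" .
  qed
qed

end
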